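(* Under Assumptions 2.1 and 2.2 (see context), for every $T>0$, every $x\in\mathbb{R}^d$ and every $h\in L^2([0,T];\mathbb{R}^m)$, the skeleton equation $$\frac{d}{dt}X^h_x(t)=b(X^h_x(t))+\sigma(X^h_x(t))h(t),\qquad X^h_x(0)=x,$$ has a unique solution $X^h_x\in C([0,T];\mathbb{R}^d)$.
   Context: $b:\mathbb{R}^d\to\mathbb{R}^d$, $\sigma:\mathbb{R}^d\to\mathbb{R}^d\otimes\mathbb{R}^m$ continuous. Assumption 2.1: there is $\varepsilon_0\in(0,1)$ such that for every $R>0$ there is $L_R>0$ with $2\langle x-y,b(x)-b(y)\rangle+\|\sigma(x)-\sigma(y)\|^2\le L_R|x-y|^2$ whenever $|x|\vee|y|\le R$, $|x-y|\le\varepsilon_0$ ($\|\cdot\|$ the Hilbert–Schmidt norm). Assumption 2.2: there exist $V\in C^2(\mathbb{R}^d;\mathbb{R}_+)$ and constants $\theta,\eta,C,M>0$ with $\lim_{|x|\to\infty}V(x)=\infty$, $\langle b,\nabla V\rangle+\frac{\theta}{2}\mathrm{Trace}(\sigma^*\nabla^2V\sigma)+\frac{|\sigma^*\nabla V|^2}{\eta V}\le C(1+V)$ and $\mathrm{Trace}(\sigma^*\nabla^2V\sigma)\ge -M-CV$ on $\mathbb{R}^d$. *)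

theory Defs
  imports "HOL-Analysis.Analysis"
begin

text \<open>The diffusion coefficient sigma(x) is a d x m matrix, represented as real^'m^'d;
  the norm on this type is the Hilbert-Schmidt (Frobenius) norm.\<close>
definition assumption_2_1 ::
  "(real^'d \<Rightarrow> real^'d) \<Rightarrow> (real^'d \<Rightarrow> real^'m^'d) \<Rightarrow> bool" where
  "assumption_2_1 b \<sigma> \<longleftrightarrow>
    (\<exists>\<epsilon>0. 0 < \<epsilon>0 \<and> \<epsilon>0 < 1 \<and>
      (\<forall>R>0. \<exists>L>0. \<forall>x y. max (norm x) (norm y) \<le> R \<and> norm (x - y) \<le> \<epsilon>0 \<longrightarrow>
          2 * ((x - y) \<bullet> (b x - b y)) + (norm (\<sigma> x - \<sigma> y))\<^sup>2 \<le> L * (norm (x - y))\<^sup>2))"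

definition C2_with_grad_hess ::
  "(real^'d \<Rightarrow> real) \<Rightarrow> (real^'d \<Rightarrow> real^'d) \<Rightarrow> (real^'d \<Rightarrow> real^'d^'d) \<Rightarrow> bool" where
  "C2_with_grad_hess V gV HV \<longleftrightarrow>
    (\<forall>x. (V has_derivative (\<lambda>v. gV x \<bullet> v)) (at x)) \<and>
    (\<forall>x. (gV has_derivative (\<lambda>v. HV x *v v)) (at x)) \<and>
    continuous_on UNIV HV"

definition assumption_2_2 ::
  "(real^'d \<Rightarrow> real^'d) \<Rightarrow> (real^'d \<Rightarrow> real^'m^'d) \<Rightarrow> bool" where
  "assumption_2_2 b \<sigma> \<longleftrightarrow>
    (\<exists>V gV HV \<theta> \<eta> C M.
      C2_with_grad_hess V gV HV \<and> (\<forall>x. 0 \<le> V x) \<and>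
      0 < \<theta> \<and> 0 < \<eta> \<and> 0 < C \<and> 0 < M \<and>
      filterlim V at_top at_infinity \<and>
      (\<forall>x. b x \<bullet> gV x + \<theta> / 2 * trace (transpose (\<sigma> x) ** HV x ** \<sigma> x)
             + (norm (transpose (\<sigma> x) *v gV x))\<^sup>2 / (\<eta> * V x) \<le> C * (1 + V x)) \<and>
      (\<forall>x. trace (transpose (\<sigma> x) ** HV x ** \<sigma> x) \<ge> - M - C * V x))"

definition L2_on :: "real \<Rightarrow> (real \<Rightarrow> real^'m) \<Rightarrow> bool" where
  "L2_on T h \<longleftrightarrow> set_borel_measurable lebesgue {0..T} h \<and>
     set_integrable lebesgue {0..T} (\<lambda>t. (norm (h t))\<^sup>2)"

definition skeleton_solution ::
  "(real^'d \<Rightarrow> real^'d) \<Rightarrow> (real^'d \<Rightarrow> real^'m^'d) \<Rightarrow> (real \<Rightarrow> real^'m) \<Rightarrow> real^'d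
     \<Rightarrow> real \<Rightarrow> (real \<Rightarrow> real^'d) \<Rightarrow> bool" where
  "skeleton_solution b \<sigma> h x T X \<longleftrightarrow>
     continuous_on {0..T} X \<and>
     (\<forall>t\<in>{0..T}. set_integrable lebesgue {0..t} (\<lambda>s. b (X s) + \<sigma> (X s) *v h s) \<and>
        X t = x + (LINT s:{0..t}|lebesgue. b (X s) + \<sigma> (X s) *v h s))"

end

theory Submission
  imports Defs "HOL-Complex_Analysis.Great_Picard"
begin

text \<open>
  Uniqueness: for two solutions \<open>X\<close>, \<open>Y\<close>, Assumption 2.1 yields a one-sided Lipschitz bound
  on every ball (for nearby points by hypothesis, for distant ones by boundedness of \<open>b\<close> and
  \<open>\<sigma>\<close>), so \<open>|X - Y|\<^sup>2\<close> satisfies a linear Gronwall inequality with rate \<open>L + |h|\<^sup>2\<close> and vanishes.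

  Existence: along any solution the Lyapunov function of Assumption 2.2 satisfies
  \<open>\<langle>\<nabla>V, b + \<sigma> h\<rangle> \<le> K (1 + |h|\<^sup>2) (1 + V)\<close>, so by Gronwall \<open>1 + V(X)\<close> stays below
  \<open>(1 + V x) exp (K \<integral>(1 + |h|\<^sup>2))\<close>, and coercivity of \<open>V\<close> confines \<open>X\<close> to a ball of radius \<open>R\<close>.
  Hence it suffices to solve the equation with \<open>b\<close>, \<open>\<sigma>\<close> truncated outside a larger ball: with
  bounded continuous coefficients a solution is the limit of a subsequence of Euler polygons
  (Arzela-Ascoli for the polygons, dominated convergence for the integrals), and it never
  leaves the ball, where the truncation is invisible.
\<close>

lemma norm_matrix_vector_mult_le:
  fixes A :: "real^'m^'d" and v :: "real^'m"
  shows "norm (A *v v) \<le> norm A * norm v"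
proof -
  have "(A *v v) $ i = (A $ i) \<bullet> v" for i
    by (simp add: matrix_vector_mult_def inner_vec_def mult.commute)
  then have "(norm (A *v v))\<^sup>2 = (\<Sum>i\<in>UNIV. ((A $ i) \<bullet> v)\<^sup>2)"
    by (simp add: norm_vec_def L2_set_def sum_nonneg)
  also have "\<dots> \<le> (\<Sum>i\<in>UNIV. (norm (A $ i))\<^sup>2 * (norm v)\<^sup>2)"
  proof (intro sum_mono)
    fix i
    have "\<bar>(A $ i) \<bullet> v\<bar>\<^sup>2 \<le> (norm (A $ i) * norm v)\<^sup>2"
      by (intro power_mono Cauchy_Schwarz_ineq2) auto
    then show "((A $ i) \<bullet> v)\<^sup>2 \<le> (norm (A $ i))\<^sup>2 * (norm v)\<^sup>2"
      by (simp add: power_mult_distrib)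
  qed
  also have "\<dots> = (norm A * norm v)\<^sup>2"
    by (simp add: norm_vec_def L2_set_def power_mult_distrib sum_distrib_right sum_nonneg)
  finally show ?thesis
    by (meson norm_ge_zero power2_le_imp_le zero_le_mult_iff)
qed

lemma bilinear_matrix_vector_mult: "bilinear (\<lambda>(A::real^'m^'d) (v::real^'m). A *v v)"
  unfolding bilinear_def
proof (intro conjI allI)
  show "linear (\<lambda>v. A *v v)" for A :: "real^'m^'d" by simp
  show "linear (\<lambda>A::real^'m^'d. A *v v)" for v :: "real^'m"
    by (rule linearI) (simp_all add: matrix_vector_mult_add_rdistrib scaleR_matrix_vector_assoc)
qed

lemma continuous_on_matrix_vector_mult:
  fixes A :: "'a::topological_space \<Rightarrow> real^'m^'d" and k :: "real^'m"
  assumes "continuous_on U A"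
  shows "continuous_on U (\<lambda>y. A y *v k)"
proof -
  have "bounded_linear (\<lambda>M::real^'m^'d. M *v k)"
    using bilinear_matrix_vector_mult unfolding bilinear_def linear_conv_bounded_linear by blast
  then show ?thesis
    using continuous_on_compose2[OF linear_continuous_on assms subset_UNIV] by blast
qed

lemma indefinite_integral_diff:
  fixes g :: "real \<Rightarrow> 'a::banach"
  assumes "g integrable_on {a..b}" "a \<le> s" "s \<le> u" "u \<le> b"
  shows "integral {a..u} g - integral {a..s} g = integral {s..u} g"
proof -
  have "integral {a..s} g + integral {s..u} g = integral {a..u} g"
    using assms by (intro Henstock_Kurzweil_Integration.integral_combine
        integrable_on_subinterval[OF assms(1)]) auto
  then show ?thesis by (simp add: algebra_simps)
qed

lemma indefinite_integral_mono:
  fixes g :: "real \<Rightarrow> real"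
  assumes "g integrable_on {a..b}" "\<And>s. s \<in> {a..b} \<Longrightarrow> 0 \<le> g s" "a \<le> s" "s \<le> u" "u \<le> b"
  shows "integral {a..s} g \<le> integral {a..u} g"
proof -
  have "0 \<le> integral {s..u} g"
    using assms by (intro integral_nonneg integrable_on_subinterval[OF assms(1)]) auto
  then show ?thesis using indefinite_integral_diff[OF assms(1,3-5)] by simp
qed

lemma absolutely_integrable_on_subinterval:
  fixes g :: "real \<Rightarrow> 'a::euclidean_space"
  assumes "g absolutely_integrable_on {a..b}" "{c..d} \<subseteq> {a..b}"
  shows "g absolutely_integrable_on {c..d}" "g integrable_on {c..d}"
  using set_integrable_subset[OF assms(1) _ assms(2)] by (simp_all add: absolutely_integrable_on_def)

lemma absolutely_integrable_mult_continuous: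
  fixes v w :: "real \<Rightarrow> real"
  assumes "continuous_on {a..b} v" "w absolutely_integrable_on {a..b}"
  shows "(\<lambda>s. w s * v s) absolutely_integrable_on {a..b}"
proof -
  have "(\<lambda>s. v s * w s) absolutely_integrable_on {a..b}"
  proof (rule absolutely_integrable_bounded_measurable_product_real)
    show "v \<in> borel_measurable (lebesgue_on {a..b})"
      by (rule continuous_imp_measurable_on_sets_lebesgue[OF assms(1)]) auto
    show "bounded (v ` {a..b})"
      by (intro compact_imp_bounded compact_continuous_image assms(1)) auto
  qed (use assms in auto)
  then show ?thesis by (simp add: mult.commute)
qed

lemma absolutely_integrable_inner_continuous:
  fixes \<phi> g :: "real \<Rightarrow> 'a::euclidean_space"
  assumes "continuous_on {a..b} \<phi>" "g absolutely_integrable_on {a..b}"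
  shows "(\<lambda>s. \<phi> s \<bullet> g s) absolutely_integrable_on {a..b}"
proof (rule absolutely_integrable_bounded_measurable_product[where h = inner])
  show "bilinear (\<bullet>)"
    unfolding bilinear_def
    by (auto intro: bounded_linear.linear bounded_linear_inner_left bounded_linear_inner_right)
  show "\<phi> \<in> borel_measurable (lebesgue_on {a..b})"
    by (rule continuous_imp_measurable_on_sets_lebesgue[OF assms(1)]) auto
  show "bounded (\<phi> ` {a..b})"
    by (intro compact_imp_bounded compact_continuous_image assms(1)) auto
qed (use assms in auto)

lemma real_interval_step_induct:
  fixes a b \<delta> :: real
  assumes "\<delta> > 0" and "P a"
    and step: "\<And>c u. a \<le> c \<Longrightarrow> c < u \<Longrightarrow> u \<le> b \<Longrightarrow> u - c < \<delta> \<Longrightarrow>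
                 (\<And>s. s \<in> {a..c} \<Longrightarrow> P s) \<Longrightarrow> P u"
    and "t \<in> {a..b}"
  shows "P t"
proof -
  have "\<forall>u. a \<le> u \<and> u \<le> b \<and> u \<le> a + real k * (\<delta>/2) \<longrightarrow> P u" for k
  proof (induction k)
    case 0
    then show ?case using \<open>P a\<close> by auto
  next
    case (Suc k)
    show ?case
    proof (intro allI impI)
      fix u assume u: "a \<le> u \<and> u \<le> b \<and> u \<le> a + real (Suc k) * (\<delta>/2)"
      show "P u"
      proof (cases "u \<le> a + real k * (\<delta>/2)")
        case True
        then show ?thesis using Suc.IH u by blast
      next
        case False
        define c where "c = a + real k * (\<delta>/2)"
        have "real (Suc k) * (\<delta>/2) = real k * (\<delta>/2) + \<delta>/2"
          by (simp add: algebra_simps)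
        moreover have "0 \<le> real k * (\<delta>/2)" using \<open>\<delta> > 0\<close> by simp
        ultimately have c: "a \<le> c" "c < u" "u - c < \<delta>"
          using False u \<open>\<delta> > 0\<close> unfolding c_def by linarith+
        show ?thesis
        proof (rule step[OF c(1,2) _ c(3)])
          show "u \<le> b" using u by simp
          show "P s" if "s \<in> {a..c}" for s
            using Suc.IH that c u unfolding c_def by auto
        qed
      qed
    qed
  qed
  moreover obtain k where "(b - a) / (\<delta>/2) \<le> real k"
    using real_arch_simple by blast
  then have "t \<le> a + real k * (\<delta>/2)"
    using \<open>\<delta> > 0\<close> \<open>t \<in> {a..b}\<close> by (auto simp: field_simps)
  ultimately show ?thesis using \<open>t \<in> {a..b}\<close> by simp
qed

lemma gradient_remainder_le:
  fixes F :: "'a::real_inner \<Rightarrow> real"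
  assumes F: "\<And>y. (F has_derivative (\<lambda>v. G y \<bullet> v)) (at y)"
    and G: "\<And>y. y \<in> closed_segment z z' \<Longrightarrow> norm (G y - G z) \<le> e"
  shows "\<bar>F z' - F z - G z \<bullet> (z' - z)\<bar> \<le> e * norm (z' - z)"
proof -
  have "norm ((F z' - G z \<bullet> z') - (F z - G z \<bullet> z)) \<le> e * norm (z' - z)"
  proof (rule differentiable_bound[where S = "closed_segment z z'" and f' = "\<lambda>y v. (G y - G z) \<bullet> v"])
    show "((\<lambda>y. F y - G z \<bullet> y) has_derivative (\<lambda>v. (G y - G z) \<bullet> v))
            (at y within closed_segment z z')" for y
    proof -
      have "((\<lambda>y. F y - G z \<bullet> y) has_derivative (\<lambda>v. G y \<bullet> v - G z \<bullet> v)) (at y)"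
        by (intro derivative_intros F)
      then show ?thesis by (simp add: inner_diff_left has_derivative_at_withinI)
    qed
    show "onorm (\<lambda>v. (G y - G z) \<bullet> v) \<le> e" if "y \<in> closed_segment z z'" for y
    proof (rule onorm_bound)
      show "0 \<le> e" using G[of z] by (meson ends_in_segment(1) norm_ge_zero order_trans)
      show "norm ((G y - G z) \<bullet> v) \<le> e * norm v" for v
        using Cauchy_Schwarz_ineq2[of "G y - G z" v] G[OF that] norm_ge_zero[of v]
        by (simp add: mult_right_mono order_trans)
    qed
  qed auto
  then show ?thesis by (simp add: inner_diff_right algebra_simps)
qed

lemma chain_rule_increment_error:
  fixes F :: "'a::euclidean_space \<Rightarrow> real" and G :: "'a \<Rightarrow> 'a" and g D :: "real \<Rightarrow> 'a"
  assumes F: "\<And>y. (F has_derivative (\<lambda>v. G y \<bullet> v)) (at y)"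
    and g: "g absolutely_integrable_on {s..u}" and GD: "(\<lambda>r. G (D r) \<bullet> g r) integrable_on {s..u}"
    and D: "D u - D s = integral {s..u} g"
    and near: "\<And>y. y \<in> closed_segment (D s) (D u) \<union> D ` {s..u} \<Longrightarrow> norm (G y - G (D s)) \<le> e"
  shows "\<bar>F (D u) - F (D s) - integral {s..u} (\<lambda>r. G (D r) \<bullet> g r)\<bar> \<le> 2 * e * integral {s..u} (\<lambda>r. norm (g r))"
proof -
  have gi: "g integrable_on {s..u}" and mi: "(\<lambda>r. norm (g r)) integrable_on {s..u}"
    using g by (auto simp: absolutely_integrable_on_def)
  have "\<bar>F (D u) - F (D s) - G (D s) \<bullet> (D u - D s)\<bar> \<le> e * norm (D u - D s)"
    using near by (intro gradient_remainder_le[OF F]) auto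
  also have "\<dots> \<le> e * integral {s..u} (\<lambda>r. norm (g r))"
    using near[of "D s"] unfolding D
    by (intro mult_left_mono integral_norm_bound_integral[OF gi mi]) (auto intro: order_trans[OF norm_ge_zero])
  finally have linearization: "\<bar>F (D u) - F (D s) - G (D s) \<bullet> (D u - D s)\<bar> \<le> e * integral {s..u} (\<lambda>r. norm (g r))" .
  have lin: "(\<lambda>r. G (D s) \<bullet> g r) integrable_on {s..u}"
    "integral {s..u} (\<lambda>r. G (D s) \<bullet> g r) = G (D s) \<bullet> integral {s..u} g"
    using integrable_linear[OF gi bounded_linear_inner_right[of "G (D s)"]]
      integral_linear[OF gi bounded_linear_inner_right[of "G (D s)"]] by (simp_all add: o_def)
  have "G (D s) \<bullet> (D u - D s) - integral {s..u} (\<lambda>r. G (D r) \<bullet> g r)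
      = integral {s..u} (\<lambda>r. (G (D s) - G (D r)) \<bullet> g r)"
    using integral_diff[OF lin(1) GD] lin(2) by (simp add: D inner_diff_left)
  also have "norm \<dots> \<le> integral {s..u} (\<lambda>r. e * norm (g r))"
  proof (rule integral_norm_bound_integral)
    show "(\<lambda>r. (G (D s) - G (D r)) \<bullet> g r) integrable_on {s..u}"
      using integrable_diff[OF lin(1) GD] by (simp add: inner_diff_left)
    show "(\<lambda>r. e * norm (g r)) integrable_on {s..u}"
      using integrable_on_cmult_left[OF mi, of e] by simp
    fix r assume "r \<in> {s..u}"
    then have "norm (G (D s) - G (D r)) * norm (g r) \<le> e * norm (g r)"
      using near[of "D r"] by (intro mult_right_mono) (simp_all add: norm_minus_commute)
    then show "norm ((G (D s) - G (D r)) \<bullet> g r) \<le> e * norm (g r)"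
      using Cauchy_Schwarz_ineq2[of "G (D s) - G (D r)" "g r"] by simp
  qed
  finally have "\<bar>G (D s) \<bullet> (D u - D s) - integral {s..u} (\<lambda>r. G (D r) \<bullet> g r)\<bar> \<le> e * integral {s..u} (\<lambda>r. norm (g r))"
    by simp
  with linearization show ?thesis by linarith
qed

lemma continuous_on_small_oscillation:
  fixes D :: "real \<Rightarrow> 'a::euclidean_space" and G :: "'a \<Rightarrow> 'b::real_normed_vector"
  assumes D: "continuous_on {a..b} D" and G: "continuous_on UNIV G" and "0 < e"
  obtains \<delta> where "0 < \<delta>" "\<And>s u y. a \<le> s \<Longrightarrow> s \<le> u \<Longrightarrow> u \<le> b \<Longrightarrow> u - s < \<delta> \<Longrightarrow>
      y \<in> closed_segment (D s) (D u) \<union> D ` {s..u} \<Longrightarrow> norm (G y - G (D s)) \<le> e"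
proof -
  obtain r where r: "\<And>s. s \<in> {a..b} \<Longrightarrow> D s \<in> cball 0 r"
    using compact_imp_bounded[OF compact_continuous_image[OF D compact_Icc]]
    by (metis bounded_iff image_eqI mem_cball_0)
  have "uniformly_continuous_on (cball 0 r) G"
    by (intro compact_uniformly_continuous continuous_on_subset[OF G]) auto
  then obtain \<rho> where "\<rho> > 0"
    and \<rho>: "\<And>y z. y \<in> cball 0 r \<Longrightarrow> z \<in> cball 0 r \<Longrightarrow> dist z y < \<rho> \<Longrightarrow> dist (G z) (G y) < e"
    unfolding uniformly_continuous_on_def using \<open>0 < e\<close> by metis
  have "uniformly_continuous_on {a..b} D"
    by (intro compact_uniformly_continuous D) auto
  then obtain \<delta> where "\<delta> > 0"
    and \<delta>: "\<And>s u. s \<in> {a..b} \<Longrightarrow> u \<in> {a..b} \<Longrightarrow> dist u s < \<delta> \<Longrightarrow> dist (D u) (D s) < \<rho>"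
    unfolding uniformly_continuous_on_def using \<open>\<rho> > 0\<close> by metis
  show ?thesis
  proof (rule that[OF \<open>\<delta> > 0\<close>])
    fix s u y assume su: "a \<le> s" "s \<le> u" "u \<le> b" "u - s < \<delta>"
      and y: "y \<in> closed_segment (D s) (D u) \<union> D ` {s..u}"
    have "y \<in> cball 0 r"
      using y closed_segment_subset[OF r[of s] r[of u] convex_cball] r su by auto
    moreover have "dist y (D s) < \<rho>"
      using y dist_in_closed_segment[of y "D s" "D u"] \<delta>[of s u] \<delta>[of s] su
      by (auto simp: dist_commute dist_real_def)
    ultimately show "norm (G y - G (D s)) \<le> e"
      using \<rho>[of "D s" y] r[of s] su by (simp add: dist_norm)
  qed
qed

lemma zero_if_abs_le_mult_all_pos:
  fixes z c :: real
  assumes "0 \<le> c" and "\<And>e. 0 < e \<Longrightarrow> \<bar>z\<bar> \<le> e * c"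
  shows "z = 0"
proof -
  have "\<bar>z\<bar> \<le> 0 + e" if "0 < e" for e
  proof -
    have "\<bar>z\<bar> \<le> e / (c + 1) * c"
      using assms(1) that by (intro assms(2)) simp
    also have "\<dots> \<le> e"
      using assms(1) that by (simp add: field_simps)
    finally show ?thesis by simp
  qed
  then show ?thesis
    using field_le_epsilon[of "\<bar>z\<bar>" 0] by simp
qed

text \<open>
  The path \<open>x + \<integral>\<^sub>a\<^sup>t g\<close> need not be differentiable, so the chain rule is proved directly:
  \<open>F (D u) - \<integral>\<^sub>a\<^sup>u G (D) \<bullet> g\<close> varies by at most \<open>2 e \<integral>|g|\<close> over short intervals, for every \<open>e > 0\<close>.
\<close>
lemma integral_chain_rule:
  fixes F :: "'a::euclidean_space \<Rightarrow> real" and G :: "'a \<Rightarrow> 'a" and g :: "real \<Rightarrow> 'a"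
  assumes F: "\<And>y. (F has_derivative (\<lambda>v. G y \<bullet> v)) (at y)"
    and G: "continuous_on UNIV G"
    and g: "g absolutely_integrable_on {a..b}"
    and t: "t \<in> {a..b}"
  shows "F (x + integral {a..t} g) = F x + integral {a..t} (\<lambda>s. G (x + integral {a..s} g) \<bullet> g s)"
proof -
  define D where "D s = x + integral {a..s} g" for s
  define H where "H s = G (D s) \<bullet> g s" for s
  define M where "M u = integral {a..u} (\<lambda>s. norm (g s))" for u
  define \<Phi> where "\<Phi> u = F (D u) - integral {a..u} H" for u
  have gi: "g integrable_on {a..b}" and mi: "(\<lambda>s. norm (g s)) integrable_on {a..b}"
    using g absolutely_integrable_on_def by auto
  have Dc: "continuous_on {a..b} D"
    unfolding D_def by (intro continuous_intros indefinite_integral_continuous_1 gi)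
  have Hi: "H integrable_on {a..b}"
    using absolutely_integrable_inner_continuous[OF continuous_on_compose2[OF G Dc subset_UNIV] g]
    by (simp add: H_def[abs_def] absolutely_integrable_on_def)
  have "\<bar>\<Phi> t - \<Phi> a\<bar> \<le> e * (2 * (M t - M a))" if "0 < e" for e
  proof -
    obtain \<delta> where "0 < \<delta>" and near: "\<And>s u y. a \<le> s \<Longrightarrow> s \<le> u \<Longrightarrow> u \<le> b \<Longrightarrow> u - s < \<delta> \<Longrightarrow>
        y \<in> closed_segment (D s) (D u) \<union> D ` {s..u} \<Longrightarrow> norm (G y - G (D s)) \<le> e"
      using continuous_on_small_oscillation[OF Dc G \<open>0 < e\<close>] by blast
    have short: "\<bar>\<Phi> u - \<Phi> s\<bar> \<le> 2 * e * (M u - M s)"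
      if su: "a \<le> s" "s \<le> u" "u \<le> b" "u - s < \<delta>" for s u
    proof -
      have "\<bar>F (D u) - F (D s) - integral {s..u} H\<bar> \<le> 2 * e * integral {s..u} (\<lambda>r. norm (g r))"
        unfolding H_def
      proof (rule chain_rule_increment_error[OF F])
        show "g absolutely_integrable_on {s..u}" "(\<lambda>r. G (D r) \<bullet> g r) integrable_on {s..u}"
          using absolutely_integrable_on_subinterval(1)[OF g] integrable_on_subinterval[OF Hi] su
          by (auto simp: H_def[abs_def])
        show "D u - D s = integral {s..u} g"
          using indefinite_integral_diff[OF gi su(1-3)] by (simp add: D_def)
      qed (rule near[OF su])
      then show ?thesis
        using indefinite_integral_diff[OF Hi su(1-3)] indefinite_integral_diff[OF mi su(1-3)]
        by (simp add: \<Phi>_def M_def)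
    qed
    have "\<bar>\<Phi> t - \<Phi> a\<bar> \<le> 2 * e * (M t - M a)"
    proof (rule real_interval_step_induct[OF \<open>0 < \<delta>\<close> _ _ t])
      fix c u assume cu: "a \<le> c" "c < u" "u \<le> b" "u - c < \<delta>"
        and IH: "\<And>s. s \<in> {a..c} \<Longrightarrow> \<bar>\<Phi> s - \<Phi> a\<bar> \<le> 2 * e * (M s - M a)"
      show "\<bar>\<Phi> u - \<Phi> a\<bar> \<le> 2 * e * (M u - M a)"
        using IH[of c] short[of c u] cu by (simp add: algebra_simps)
    qed simp
    then show ?thesis by (simp add: algebra_simps)
  qed
  moreover have "0 \<le> M t - M a"
    using t by (auto simp: M_def intro!: integral_nonneg integrable_on_subinterval[OF mi])
  ultimately have "\<Phi> t - \<Phi> a = 0"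
    by (intro zero_if_abs_le_mult_all_pos[of "2 * (M t - M a)"]) simp_all
  then show ?thesis
    by (simp add: \<Phi>_def D_def H_def[abs_def] algebra_simps)
qed

lemma gronwall_zero:
  fixes v w :: "real \<Rightarrow> real"
  assumes v: "continuous_on {a..b} v" "\<And>t. t \<in> {a..b} \<Longrightarrow> 0 \<le> v t"
    and w: "w absolutely_integrable_on {a..b}" "\<And>t. t \<in> {a..b} \<Longrightarrow> 0 \<le> w t"
    and le: "\<And>t. t \<in> {a..b} \<Longrightarrow> v t \<le> integral {a..t} (\<lambda>s. w s * v s)"
    and t: "t \<in> {a..b}"
  shows "v t = 0"
proof -
  have wi: "w integrable_on {a..b}" and wvi: "(\<lambda>s. w s * v s) integrable_on {a..b}"
    using w(1) absolutely_integrable_mult_continuous[OF v(1) w(1)]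
    by (auto simp: absolutely_integrable_on_def)
  have "uniformly_continuous_on {a..b} (\<lambda>u. integral {a..u} w)"
    by (intro compact_uniformly_continuous indefinite_integral_continuous_1 wi) auto
  then obtain \<delta> where "\<delta> > 0" and \<delta>: "\<And>s u. s \<in> {a..b} \<Longrightarrow> u \<in> {a..b} \<Longrightarrow> dist u s < \<delta> \<Longrightarrow>
      dist (integral {a..u} w) (integral {a..s} w) < 1/2"
    unfolding uniformly_continuous_on_def by (metis zero_less_divide_1_iff zero_less_numeral)
  show ?thesis
  proof (rule real_interval_step_induct[OF \<open>\<delta> > 0\<close> _ _ t])
    show "v a = 0" using le[of a] v(2)[of a] t by auto
  next
    fix c u assume cu: "a \<le> c" "c < u" "u \<le> b" "u - c < \<delta>"
      and IH: "\<And>s. s \<in> {a..c} \<Longrightarrow> v s = 0"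
    obtain t0 where t0: "t0 \<in> {c..u}" and max: "\<And>s. s \<in> {c..u} \<Longrightarrow> v s \<le> v t0"
      using continuous_attains_sup[of "{c..u}" v] continuous_on_subset[OF v(1), of "{c..u}"] cu
      by fastforce
    have "integral {a..c} (\<lambda>s. w s * v s) = 0"
      using integral_cong[of "{a..c}" "\<lambda>s. w s * v s" "\<lambda>s. 0"] IH by simp
    then have "v t0 \<le> integral {c..t0} (\<lambda>s. w s * v s)"
      using le[of t0] indefinite_integral_diff[OF wvi, of c t0] t0 cu by simp
    also have "\<dots> \<le> integral {c..t0} (\<lambda>s. v t0 * w s)"
    proof (rule integral_le)
      show "(\<lambda>s. w s * v s) integrable_on {c..t0}"
        using t0 cu by (intro integrable_on_subinterval[OF wvi]) auto
      show "(\<lambda>s. v t0 * w s) integrable_on {c..t0}"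
        using integrable_on_cmult_left[OF integrable_on_subinterval[OF wi], of c t0 "v t0"] t0 cu
        by simp
      show "w s * v s \<le> v t0 * w s" if "s \<in> {c..t0}" for s
        using max[of s] w(2)[of s] that t0 cu by (simp add: mult.commute mult_right_mono)
    qed
    also have "\<dots> = v t0 * (integral {a..t0} w - integral {a..c} w)"
      using indefinite_integral_diff[OF wi, of c t0] t0 cu by simp
    also have "\<dots> \<le> v t0 * (1/2)"
    proof (rule mult_left_mono)
      show "integral {a..t0} w - integral {a..c} w \<le> 1/2"
        using \<delta>[of c t0] t0 cu abs_ge_self[of "integral {a..t0} w - integral {a..c} w"]
        by (simp add: dist_real_def)
      show "0 \<le> v t0" using v(2)[of t0] t0 cu by simp
    qed
    finally have "v t0 \<le> 0" by simp
    then show "v u = 0" using max[of u] v(2)[of u] cu by simp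
  qed
qed

lemma gronwall_exp:
  fixes \<phi> w :: "real \<Rightarrow> real"
  assumes \<phi>: "continuous_on {a..b} \<phi>"
    and w: "w absolutely_integrable_on {a..b}" "\<And>t. t \<in> {a..b} \<Longrightarrow> 0 \<le> w t"
    and "0 \<le> A"
    and le: "\<And>t. t \<in> {a..b} \<Longrightarrow> \<phi> t \<le> A + integral {a..t} (\<lambda>s. w s * \<phi> s)"
    and t: "t \<in> {a..b}"
  shows "\<phi> t \<le> A * exp (integral {a..b} w)"
proof -
  have wi: "w integrable_on {a..b}" using w(1) by (simp add: absolutely_integrable_on_def)
  define \<psi> where "\<psi> u = A * exp (integral {a..u} w)" for u
  have \<psi>: "continuous_on {a..b} \<psi>"
    unfolding \<psi>_def by (intro continuous_intros indefinite_integral_continuous_1 wi)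
  have \<psi>_eq: "\<psi> u = A + integral {a..u} (\<lambda>s. w s * \<psi> s)" if "u \<in> {a..b}" for u
  proof -
    have "(exp has_derivative (\<lambda>v. exp y \<bullet> v)) (at y)" for y :: real
      using DERIV_exp[of y] by (simp add: has_field_derivative_def inner_real_def mult_commute_abs)
    from integral_chain_rule[where G = exp and x = 0, OF this continuous_on_exp[OF continuous_on_id] w(1) that]
    have "exp (integral {a..u} w) = 1 + integral {a..u} (\<lambda>s. w s * exp (integral {a..s} w))"
      by (simp add: inner_real_def mult.commute)
    then show ?thesis
      by (simp add: \<psi>_def[abs_def] algebra_simps)
  qed
  have times_w_integrable: "(\<lambda>s. w s * f s) integrable_on {a..u}"
    if "continuous_on {a..b} f" "u \<in> {a..b}" for f u
    using absolutely_integrable_mult_continuous[OF that(1) w(1)] that(2)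
    by (auto simp: absolutely_integrable_on_def intro: integrable_on_subinterval)
  define v where "v u = max (\<phi> u - \<psi> u) 0" for u
  have v: "continuous_on {a..b} v"
    unfolding v_def by (intro continuous_intros \<phi> \<psi>)
  have "v u \<le> integral {a..u} (\<lambda>s. w s * v s)" if u: "u \<in> {a..b}" for u
  proof -
    have "\<phi> u - \<psi> u \<le> integral {a..u} (\<lambda>s. w s * \<phi> s) - integral {a..u} (\<lambda>s. w s * \<psi> s)"
      using le[OF u] \<psi>_eq[OF u] by simp
    also have "\<dots> = integral {a..u} (\<lambda>s. w s * (\<phi> s - \<psi> s))"
      by (simp add: right_diff_distrib integral_diff[OF times_w_integrable[OF \<phi> u] times_w_integrable[OF \<psi> u]])
    also have "\<dots> \<le> integral {a..u} (\<lambda>s. w s * v s)"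
    proof (rule integral_le)
      show "(\<lambda>s. w s * (\<phi> s - \<psi> s)) integrable_on {a..u}"
        by (intro times_w_integrable continuous_intros \<phi> \<psi> u)
      show "(\<lambda>s. w s * v s) integrable_on {a..u}" by (intro times_w_integrable v u)
      show "w s * (\<phi> s - \<psi> s) \<le> w s * v s" if "s \<in> {a..u}" for s
        using w(2)[of s] that u by (intro mult_left_mono) (auto simp: v_def)
    qed
    finally have "\<phi> u - \<psi> u \<le> integral {a..u} (\<lambda>s. w s * v s)" .
    moreover have "0 \<le> integral {a..u} (\<lambda>s. w s * v s)"
      using u w(2) by (intro integral_nonneg times_w_integrable[OF v u]) (auto simp: v_def)
    ultimately show ?thesis by (simp add: v_def)
  qed
  then have "v t = 0"
    by (intro gronwall_zero[OF v _ w _ t]) (auto simp: v_def)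
  then have "\<phi> t \<le> \<psi> t" by (simp add: v_def)
  also have "\<dots> \<le> A * exp (integral {a..b} w)"
    using indefinite_integral_mono[OF wi w(2), of t b] t \<open>0 \<le> A\<close>
    by (simp add: \<psi>_def mult_left_mono)
  finally show ?thesis .
qed

lemma continuous_on_cball_bounded:
  fixes f :: "'a::{real_normed_vector,heine_borel} \<Rightarrow> 'b::real_normed_vector"
  assumes "continuous_on UNIV f"
  obtains K where "0 \<le> K" "\<And>y. norm y \<le> R \<Longrightarrow> norm (f y) \<le> K"
proof -
  have "bounded (f ` cball 0 R)"
    by (intro compact_imp_bounded compact_continuous_image continuous_on_subset[OF assms]) auto
  then obtain K where "\<And>y. norm y \<le> R \<Longrightarrow> norm (f y) \<le> K"
    unfolding bounded_iff by (metis image_eqI mem_cball_0)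
  then show ?thesis
    by (intro that[of "max K 0"]) (auto simp: le_max_iff_disj)
qed

lemma L2_on_absolutely_integrable:
  fixes h :: "real \<Rightarrow> real^'m"
  assumes "L2_on T h"
  shows "(\<lambda>t. (norm (h t))\<^sup>2) absolutely_integrable_on {0..T}"
    and "h absolutely_integrable_on {0..T}"
proof -
  show sq: "(\<lambda>t. (norm (h t))\<^sup>2) absolutely_integrable_on {0..T}"
    using assms by (simp add: L2_on_def)
  have "h \<in> borel_measurable (lebesgue_on {0..T})"
    using assms unfolding L2_on_def set_borel_measurable_def
    by (subst borel_measurable_restrict_space_iff) auto
  then show "h absolutely_integrable_on {0..T}"
  proof (rule measurable_bounded_by_integrable_imp_absolutely_integrable)
    show "(\<lambda>t. 1 + (norm (h t))\<^sup>2) integrable_on {0..T}"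
      using sq by (intro integrable_add) (auto simp: absolutely_integrable_on_def)
    show "norm (h t) \<le> 1 + (norm (h t))\<^sup>2" for t
      using sum_squares_bound[of "norm (h t)" 1] norm_ge_zero[of "h t"] by (simp, linarith)
  qed auto
qed

lemma skeleton_solution_iff:
  "skeleton_solution b \<sigma> h x T X \<longleftrightarrow> continuous_on {0..T} X \<and>
     (\<forall>t\<in>{0..T}. (\<lambda>s. b (X s) + \<sigma> (X s) *v h s) absolutely_integrable_on {0..t} \<and>
        X t = x + integral {0..t} (\<lambda>s. b (X s) + \<sigma> (X s) *v h s))"
  unfolding skeleton_solution_def
  by (metis (no_types, lifting) set_lebesgue_integral_eq_integral(2))

lemma one_sided_bound_of_bounded:
  fixes b :: "'a::real_inner \<Rightarrow> 'a" and \<sigma> :: "'a \<Rightarrow> 'b::real_normed_vector"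
  assumes "0 < \<epsilon>" "\<epsilon> \<le> norm (x - y)"
    and "norm (b x) \<le> Kb" "norm (b y) \<le> Kb" "norm (\<sigma> x) \<le> Ks" "norm (\<sigma> y) \<le> Ks"
  shows "2 * ((x - y) \<bullet> (b x - b y)) + (norm (\<sigma> x - \<sigma> y))\<^sup>2
           \<le> (4 * Kb / \<epsilon> + 4 * Ks\<^sup>2 / \<epsilon>\<^sup>2) * (norm (x - y))\<^sup>2"
proof -
  define d where "d = norm (x - y)"
  have ratio: "1 \<le> d / \<epsilon>" and "0 \<le> Kb"
    using assms by (auto simp: d_def intro: order_trans[OF norm_ge_zero])
  have "(x - y) \<bullet> (b x - b y) \<le> d * norm (b x - b y)"
    unfolding d_def by (rule order_trans[OF abs_ge_self Cauchy_Schwarz_ineq2])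
  also have "\<dots> \<le> d * (2 * Kb * (d / \<epsilon>))"
    using norm_triangle_ineq4[of "b x" "b y"] assms(3,4) mult_left_mono[OF ratio, of "2 * Kb"] \<open>0 \<le> Kb\<close>
    by (intro mult_left_mono) (auto simp: d_def)
  also have "\<dots> = 2 * Kb / \<epsilon> * d\<^sup>2"
    by (simp add: power2_eq_square)
  finally have drift: "2 * ((x - y) \<bullet> (b x - b y)) \<le> 4 * Kb / \<epsilon> * d\<^sup>2"
    by simp
  have "norm (\<sigma> x - \<sigma> y) \<le> 2 * Ks"
    using norm_triangle_ineq4[of "\<sigma> x" "\<sigma> y"] assms(5,6) by simp
  then have "(norm (\<sigma> x - \<sigma> y))\<^sup>2 \<le> (2 * Ks)\<^sup>2"
    by (intro power_mono) simp_all
  also have "\<dots> = 4 * Ks\<^sup>2 * 1"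
    by (simp add: power_mult_distrib)
  also have "\<dots> \<le> 4 * Ks\<^sup>2 * (d / \<epsilon>)\<^sup>2"
    using ratio by (intro mult_left_mono) (auto simp: one_le_power)
  finally have "(norm (\<sigma> x - \<sigma> y))\<^sup>2 \<le> 4 * Ks\<^sup>2 / \<epsilon>\<^sup>2 * d\<^sup>2"
    by (simp add: power_divide)
  with drift show ?thesis
    unfolding d_def[symmetric] by (simp add: algebra_simps)
qed

lemma assumption_2_1_on_cball:
  fixes b :: "real^'d \<Rightarrow> real^'d" and \<sigma> :: "real^'d \<Rightarrow> real^'m^'d"
  assumes cb: "continuous_on UNIV b" and cs: "continuous_on UNIV \<sigma>" and "assumption_2_1 b \<sigma>"
  obtains L where "0 < L" "\<And>x y. norm x \<le> R \<Longrightarrow> norm y \<le> R \<Longrightarrow>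
      2 * ((x - y) \<bullet> (b x - b y)) + (norm (\<sigma> x - \<sigma> y))\<^sup>2 \<le> L * (norm (x - y))\<^sup>2"
proof -
  obtain \<epsilon>0 where "0 < \<epsilon>0" and local: "\<forall>R>0. \<exists>L>0. \<forall>x y. max (norm x) (norm y) \<le> R \<and> norm (x - y) \<le> \<epsilon>0 \<longrightarrow>
      2 * ((x - y) \<bullet> (b x - b y)) + (norm (\<sigma> x - \<sigma> y))\<^sup>2 \<le> L * (norm (x - y))\<^sup>2"
    using \<open>assumption_2_1 b \<sigma>\<close> unfolding assumption_2_1_def by blast
  obtain L0 where "0 < L0" and near: "\<And>x y. max (norm x) (norm y) \<le> max R 1 \<Longrightarrow> norm (x - y) \<le> \<epsilon>0 \<Longrightarrow>
      2 * ((x - y) \<bullet> (b x - b y)) + (norm (\<sigma> x - \<sigma> y))\<^sup>2 \<le> L0 * (norm (x - y))\<^sup>2"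
    using local[rule_format, of "max R 1"] by (metis less_max_iff_disj zero_less_one)
  obtain Kb where "0 \<le> Kb" and Kb: "\<And>y. norm y \<le> R \<Longrightarrow> norm (b y) \<le> Kb"
    using continuous_on_cball_bounded[OF cb] by blast
  obtain Ks where "0 \<le> Ks" and Ks: "\<And>y. norm y \<le> R \<Longrightarrow> norm (\<sigma> y) \<le> Ks"
    using continuous_on_cball_bounded[OF cs] by blast
  define L where "L = L0 + (4 * Kb / \<epsilon>0 + 4 * Ks\<^sup>2 / \<epsilon>0\<^sup>2)"
  show ?thesis
  proof (rule that)
    show "0 < L"
      unfolding L_def using \<open>0 < L0\<close> \<open>0 \<le> Kb\<close> \<open>0 < \<epsilon>0\<close> by (intro add_pos_nonneg) auto
    fix x y :: "real^'d" assume x: "norm x \<le> R" and y: "norm y \<le> R"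
    have "0 \<le> (norm (x - y))\<^sup>2" by simp
    moreover have "L0 * (norm (x - y))\<^sup>2 \<le> L * (norm (x - y))\<^sup>2"
      "(4 * Kb / \<epsilon>0 + 4 * Ks\<^sup>2 / \<epsilon>0\<^sup>2) * (norm (x - y))\<^sup>2 \<le> L * (norm (x - y))\<^sup>2"
      unfolding L_def using \<open>0 < L0\<close> \<open>0 \<le> Kb\<close> \<open>0 < \<epsilon>0\<close> by (intro mult_right_mono; simp)+
    moreover note near[of x y] one_sided_bound_of_bounded[OF \<open>0 < \<epsilon>0\<close> _ Kb[OF x] Kb[OF y] Ks[OF x] Ks[OF y]]
    ultimately show "2 * ((x - y) \<bullet> (b x - b y)) + (norm (\<sigma> x - \<sigma> y))\<^sup>2 \<le> L * (norm (x - y))\<^sup>2"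
      using x y by (cases "norm (x - y) \<le> \<epsilon>0") (auto simp: le_max_iff_disj)
  qed
qed

lemma skeleton_field_one_sided_lipschitz:
  fixes b :: "real^'d \<Rightarrow> real^'d" and \<sigma> :: "real^'d \<Rightarrow> real^'m^'d"
  assumes "2 * ((x - y) \<bullet> (b x - b y)) + (norm (\<sigma> x - \<sigma> y))\<^sup>2 \<le> L * (norm (x - y))\<^sup>2"
  shows "(2 *\<^sub>R (x - y)) \<bullet> ((b x + \<sigma> x *v k) - (b y + \<sigma> y *v k))
           \<le> (L + (norm k)\<^sup>2) * (norm (x - y))\<^sup>2"
proof -
  define z S where "z = x - y" and "S = \<sigma> x - \<sigma> y"
  have "z \<bullet> (S *v k) \<le> norm z * norm (S *v k)"
    by (rule order_trans[OF abs_ge_self Cauchy_Schwarz_ineq2])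
  also have "\<dots> \<le> norm z * (norm S * norm k)"
    by (intro mult_left_mono norm_matrix_vector_mult_le) simp
  finally have "2 * (z \<bullet> (S *v k)) \<le> 2 * (norm S * (norm z * norm k))"
    by (simp add: mult_ac)
  also have "\<dots> \<le> (norm S)\<^sup>2 + (norm z * norm k)\<^sup>2"
    using sum_squares_bound[of "norm S" "norm z * norm k"] by simp
  finally have "2 * (z \<bullet> (S *v k)) \<le> (norm S)\<^sup>2 + (norm z)\<^sup>2 * (norm k)\<^sup>2"
    by (simp add: power_mult_distrib)
  moreover have "(b x + \<sigma> x *v k) - (b y + \<sigma> y *v k) = (b x - b y) + S *v k"
    by (simp add: S_def matrix_vector_mult_diff_rdistrib)
  ultimately show ?thesis
    using assms by (simp add: z_def S_def inner_add_right algebra_simps)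
qed

lemma power2_norm_integral:
  fixes g :: "real \<Rightarrow> 'a::euclidean_space"
  assumes g: "g absolutely_integrable_on {a..b}" and t: "t \<in> {a..b}"
  shows "(\<lambda>s. (2 *\<^sub>R integral {a..s} g) \<bullet> g s) integrable_on {a..t}"
    and "(norm (integral {a..t} g))\<^sup>2 = integral {a..t} (\<lambda>s. (2 *\<^sub>R integral {a..s} g) \<bullet> g s)"
proof -
  have "continuous_on {a..t} (\<lambda>s. 2 *\<^sub>R integral {a..s} g)"
    using t absolutely_integrable_on_subinterval(2)[OF g, of a t]
    by (intro continuous_intros indefinite_integral_continuous_1) auto
  from absolutely_integrable_inner_continuous[OF this absolutely_integrable_on_subinterval(1)[OF g, of a t]]
  show "(\<lambda>s. (2 *\<^sub>R integral {a..s} g) \<bullet> g s) integrable_on {a..t}"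
    using t by (simp add: absolutely_integrable_on_def)
  have "((\<lambda>y. y \<bullet> y) has_derivative (\<lambda>v. (2 *\<^sub>R y) \<bullet> v)) (at y)" for y :: 'a
    using has_derivative_inner[OF has_derivative_ident has_derivative_ident, of y]
    by (simp add: inner_commute)
  from integral_chain_rule[OF this _ g t, of 0]
  show "(norm (integral {a..t} g))\<^sup>2 = integral {a..t} (\<lambda>s. (2 *\<^sub>R integral {a..s} g) \<bullet> g s)"
    by (simp add: continuous_on_scaleR power2_norm_eq_inner)
qed

lemma skeleton_solution_unique:
  fixes b :: "real^'d \<Rightarrow> real^'d" and \<sigma> :: "real^'d \<Rightarrow> real^'m^'d"
  assumes cb: "continuous_on UNIV b" and cs: "continuous_on UNIV \<sigma>"
    and A: "assumption_2_1 b \<sigma>" and h: "L2_on T h"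
    and X: "skeleton_solution b \<sigma> h x T X" and Y: "skeleton_solution b \<sigma> h x T Y"
    and t: "t \<in> {0..T}"
  shows "Y t = X t"
proof -
  define g where "g s = (b (X s) + \<sigma> (X s) *v h s) - (b (Y s) + \<sigma> (Y s) *v h s)" for s
  have Xc: "continuous_on {0..T} X" and Yc: "continuous_on {0..T} Y"
    using X Y by (simp_all add: skeleton_solution_iff)
  have g: "g absolutely_integrable_on {0..T}"
    using X Y t unfolding skeleton_solution_iff g_def[abs_def] by (simp add: set_integral_diff(1))
  have XY_eq: "X s - Y s = integral {0..s} g" if "s \<in> {0..T}" for s
    using X Y that unfolding skeleton_solution_iff g_def[abs_def]
    by (simp add: integral_diff absolutely_integrable_on_def)
  obtain R where R: "\<And>s. s \<in> {0..T} \<Longrightarrow> norm (X s) \<le> R \<and> norm (Y s) \<le> R"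
    using compact_imp_bounded[OF compact_continuous_image[OF Xc compact_Icc]]
      compact_imp_bounded[OF compact_continuous_image[OF Yc compact_Icc]]
    unfolding bounded_iff by (metis image_eqI max.cobounded1 max.cobounded2 order_trans)
  obtain L where "0 < L" and L: "\<And>x y. norm x \<le> R \<Longrightarrow> norm y \<le> R \<Longrightarrow>
      2 * ((x - y) \<bullet> (b x - b y)) + (norm (\<sigma> x - \<sigma> y))\<^sup>2 \<le> L * (norm (x - y))\<^sup>2"
    using assumption_2_1_on_cball[OF cb cs A] by blast
  define v where "v s = (norm (X s - Y s))\<^sup>2" for s
  define w where "w s = L + (norm (h s))\<^sup>2" for s
  have v: "continuous_on {0..T} v"
    unfolding v_def by (intro continuous_intros Xc Yc)
  have w: "w absolutely_integrable_on {0..T}"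
    unfolding w_def using set_integral_add(1)[OF absolutely_integrable_continuous_real[OF continuous_on_const]
        L2_on_absolutely_integrable(1)[OF h]] by simp
  have "v u \<le> integral {0..u} (\<lambda>s. w s * v s)" if u: "u \<in> {0..T}" for u
  proof -
    have "v u = integral {0..u} (\<lambda>s. (2 *\<^sub>R integral {0..s} g) \<bullet> g s)"
      using power2_norm_integral(2)[OF g u] XY_eq[OF u] by (simp add: v_def)
    also have "\<dots> \<le> integral {0..u} (\<lambda>s. w s * v s)"
    proof (rule integral_le[OF power2_norm_integral(1)[OF g u]])
      show "(\<lambda>s. w s * v s) integrable_on {0..u}"
        using absolutely_integrable_on_subinterval(2)[OF absolutely_integrable_mult_continuous[OF v w]] u by simp
      show "(2 *\<^sub>R integral {0..s} g) \<bullet> g s \<le> w s * v s" if "s \<in> {0..u}" for s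
        using skeleton_field_one_sided_lipschitz[OF L[of "X s" "Y s"], where k = "h s"] R[of s] XY_eq[of s] that u
        by (simp add: g_def w_def v_def)
    qed
    finally show ?thesis .
  qed
  then have "v t = 0"
    using \<open>0 < L\<close> by (intro gronwall_zero[OF v _ w _ _ t]) (auto simp: v_def w_def)
  then show ?thesis by (simp add: v_def)
qed

lemma inner_le_weighted_squares:
  fixes u k :: "'a::real_inner"
  assumes "0 < c"
  shows "u \<bullet> k \<le> (norm u)\<^sup>2 / c + c / 4 * (norm k)\<^sup>2"
proof -
  have "(norm u)\<^sup>2 / c + c / 4 * (norm k)\<^sup>2 - norm u * norm k = (2 * norm u - c * norm k)\<^sup>2 / (4 * c)"
    using assms by (simp add: field_simps power2_eq_square)
  moreover have "0 \<le> (2 * norm u - c * norm k)\<^sup>2 / (4 * c)"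
    using assms by simp
  moreover have "u \<bullet> k \<le> norm u * norm k"
    by (rule order_trans[OF abs_ge_self Cauchy_Schwarz_ineq2])
  ultimately show ?thesis by linarith
qed

lemma assumption_2_2_lyapunov_drift:
  fixes b :: "real^'d \<Rightarrow> real^'d" and \<sigma> :: "real^'d \<Rightarrow> real^'m^'d"
  assumes "assumption_2_2 b \<sigma>"
  obtains V gV K where "\<And>y. (V has_derivative (\<lambda>v. gV y \<bullet> v)) (at y)" "continuous_on UNIV gV"
    "\<And>y. 0 \<le> V y" "filterlim V at_top at_infinity" "0 < K"
    "\<And>y k. gV y \<bullet> (b y + \<sigma> y *v k) \<le> K * (1 + (norm k)\<^sup>2) * (1 + V y)"
proof -
  obtain V gV HV \<theta> \<eta> C M where C2: "C2_with_grad_hess V gV HV" and V_nonneg: "\<forall>x. 0 \<le> V x"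
    and pos: "0 < \<theta>" "0 < \<eta>" "0 < C" "0 < M"
    and lim: "filterlim V at_top at_infinity"
    and L1: "\<forall>x. b x \<bullet> gV x + \<theta> / 2 * trace (transpose (\<sigma> x) ** HV x ** \<sigma> x)
             + (norm (transpose (\<sigma> x) *v gV x))\<^sup>2 / (\<eta> * V x) \<le> C * (1 + V x)"
    and L2: "\<forall>x. trace (transpose (\<sigma> x) ** HV x ** \<sigma> x) \<ge> - M - C * V x"
    using assms unfolding assumption_2_2_def by blast
  have dV: "(V has_derivative (\<lambda>v. gV y \<bullet> v)) (at y)" for y
    using C2 unfolding C2_with_grad_hess_def by blast
  have "(gV has_derivative (\<lambda>v. HV y *v v)) (at y)" for y
    using C2 unfolding C2_with_grad_hess_def by blast
  then have gV: "continuous_on UNIV gV"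
    using has_derivative_continuous continuous_at_imp_continuous_on by blast
  define K where "K = C + \<theta> / 2 * M + \<theta> / 2 * C + \<eta> / 4"
  show ?thesis
  proof (rule that[OF dV gV _ lim])
    show "0 \<le> V y" for y using V_nonneg by simp
    show "0 < K" unfolding K_def using pos by (simp add: add_pos_pos)
    fix y :: "real^'d" and k :: "real^'m"
    define Tr where "Tr = trace (transpose (\<sigma> y) ** HV y ** \<sigma> y)"
    define u where "u = transpose (\<sigma> y) *v gV y"
    have Vy: "0 \<le> V y" using V_nonneg by simp
    have "gV y \<bullet> (\<sigma> y *v k) = u \<bullet> k"
      unfolding u_def by (simp add: dot_lmul_matrix)
    then have "gV y \<bullet> (b y + \<sigma> y *v k) = b y \<bullet> gV y + u \<bullet> k"
      by (simp add: inner_add_right inner_commute)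
    also have "\<dots> \<le> C * (1 + V y) + \<theta> / 2 * M + \<theta> / 2 * C * V y + \<eta> / 4 * V y * (norm k)\<^sup>2"
    proof (cases "V y = 0")
      case True
      \<comment> \<open>Here the term divided by \<open>\<eta> * V y\<close> is junk (\<open>x / 0 = 0\<close>), but \<open>y\<close> minimises \<open>V\<close>, so \<open>gV y = 0\<close>.\<close>
      have "eventually (\<lambda>z. V y \<le> V z) (at y)" using V_nonneg True by simp
      then have "(\<lambda>v. gV y \<bullet> v) = (\<lambda>v. 0)" by (rule has_derivative_local_min[OF dV])
      then have "gV y = 0" by (metis inner_eq_zero_iff)
      then show ?thesis using pos True by (simp add: u_def)
    next
      case False
      define c where "c = \<eta> * V y"
      have "0 < c" using False Vy pos by (simp add: c_def)
      then have "u \<bullet> k \<le> (norm u)\<^sup>2 / c + \<eta> / 4 * V y * (norm k)\<^sup>2"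
        using inner_le_weighted_squares[of c u k] by (simp add: c_def)
      moreover have "- (\<theta> / 2 * Tr) \<le> \<theta> / 2 * M + \<theta> / 2 * C * V y"
        using mult_left_mono[OF L2[rule_format, of y], of "\<theta> / 2"] pos
        by (simp add: Tr_def algebra_simps)
      ultimately show ?thesis
        using L1[rule_format, of y] by (simp add: Tr_def u_def c_def)
    qed
    also have "\<dots> \<le> K * (1 + (norm k)\<^sup>2) * (1 + V y)"
    proof -
      define P where "P = (1 + (norm k)\<^sup>2) * (1 + V y)"
      have "1 + V y \<le> P" "1 \<le> P" "V y \<le> P" "V y * (norm k)\<^sup>2 \<le> P"
        using Vy by (simp_all add: P_def algebra_simps)
      then have "C * (1 + V y) + \<theta> / 2 * M + \<theta> / 2 * C * V y + \<eta> / 4 * V y * (norm k)\<^sup>2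
          \<le> C * P + \<theta> / 2 * M * P + \<theta> / 2 * C * P + \<eta> / 4 * P"
        using pos by (intro add_mono) (simp_all add: mult.assoc)
      also have "\<dots> = K * P" by (simp add: K_def algebra_simps)
      finally show ?thesis by (simp add: P_def mult.assoc)
    qed
    finally show "gV y \<bullet> (b y + \<sigma> y *v k) \<le> K * (1 + (norm k)\<^sup>2) * (1 + V y)" .
  qed
qed

lemma lyapunov_gronwall_bound:
  fixes V :: "'a::euclidean_space \<Rightarrow> real" and f :: "real \<Rightarrow> 'a"
  assumes dV: "\<And>y. (V has_derivative (\<lambda>v. gV y \<bullet> v)) (at y)" and gV: "continuous_on UNIV gV"
    and V_nonneg: "\<And>y. 0 \<le> V y"
    and f: "f absolutely_integrable_on {0..\<tau>}"
    and w: "w absolutely_integrable_on {0..\<tau>}" "\<And>s. s \<in> {0..\<tau>} \<Longrightarrow> 0 \<le> w s"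
    and drift: "\<And>s. s \<in> {0..\<tau>} \<Longrightarrow>
      gV (x + integral {0..s} f) \<bullet> f s \<le> w s * (1 + V (x + integral {0..s} f))"
    and "0 \<le> \<tau>"
  shows "1 + V (x + integral {0..\<tau>} f) \<le> (1 + V x) * exp (integral {0..\<tau>} w)"
proof -
  define D where "D s = x + integral {0..s} f" for s
  have D: "continuous_on {0..\<tau>} D"
    unfolding D_def using f
    by (intro continuous_intros indefinite_integral_continuous_1) (simp add: absolutely_integrable_on_def)
  have V: "continuous_on UNIV V"
    using dV has_derivative_continuous continuous_at_imp_continuous_on by blast
  have \<phi>: "continuous_on {0..\<tau>} (\<lambda>s. 1 + V (D s))"
    by (intro continuous_intros continuous_on_compose2[OF V D]) auto
  have "1 + V (D s) \<le> (1 + V x) + integral {0..s} (\<lambda>r. w r * (1 + V (D r)))" if s: "s \<in> {0..\<tau>}" for s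
  proof -
    have sub: "{0..s} \<subseteq> {0..\<tau>}" using s by auto
    have "V (D s) = V x + integral {0..s} (\<lambda>r. gV (D r) \<bullet> f r)"
      using integral_chain_rule[OF dV gV f s] by (simp add: D_def[abs_def])
    also have "integral {0..s} (\<lambda>r. gV (D r) \<bullet> f r) \<le> integral {0..s} (\<lambda>r. w r * (1 + V (D r)))"
    proof (rule integral_le)
      show "(\<lambda>r. gV (D r) \<bullet> f r) integrable_on {0..s}"
        using absolutely_integrable_on_subinterval(2)[OF absolutely_integrable_inner_continuous[OF
              continuous_on_compose2[OF gV D subset_UNIV] f] sub] .
      show "(\<lambda>r. w r * (1 + V (D r))) integrable_on {0..s}"
        using absolutely_integrable_on_subinterval(2)[OF absolutely_integrable_mult_continuous[OF \<phi> w(1)] sub] .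
      show "gV (D r) \<bullet> f r \<le> w r * (1 + V (D r))" if "r \<in> {0..s}" for r
        using drift[of r] that sub by (auto simp: D_def)
    qed
    finally show ?thesis by simp
  qed
  then have "1 + V (D \<tau>) \<le> (1 + V x) * exp (integral {0..\<tau>} w)"
    using V_nonneg[of x] \<open>0 \<le> \<tau>\<close> by (intro gronwall_exp[OF \<phi> w]) (auto intro: add_nonneg_nonneg)
  then show ?thesis by (simp add: D_def)
qed

lemma continuous_on_stays_in_ball:
  fixes X :: "real \<Rightarrow> 'a::real_normed_vector"
  assumes X: "continuous_on {a..b} X" and "norm (X a) < R"
    and stay: "\<And>\<tau>. \<tau> \<in> {a..b} \<Longrightarrow> (\<And>s. s \<in> {a..\<tau>} \<Longrightarrow> norm (X s) \<le> R) \<Longrightarrow> norm (X \<tau>) < R"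
    and t: "t \<in> {a..b}"
  shows "norm (X t) < R"
proof (rule ccontr)
  assume "\<not> norm (X t) < R"
  define S where "S = {s \<in> {a..b}. R \<le> norm (X s)}"
  define \<tau> where "\<tau> = Inf S"
  have "S \<noteq> {}" using t \<open>\<not> norm (X t) < R\<close> by (auto simp: S_def)
  moreover have "bdd_below S" by (auto simp: S_def bdd_below_def)
  moreover have "closed S"
  proof -
    have "closed ({a..b} \<inter> (\<lambda>s. norm (X s)) -` {R..})"
      by (intro continuous_closed_preimage continuous_on_norm X) auto
    moreover have "{a..b} \<inter> (\<lambda>s. norm (X s)) -` {R..} = S" by (auto simp: S_def)
    ultimately show ?thesis by simp
  qed
  ultimately have "\<tau> \<in> S"
    unfolding \<tau>_def by (rule closed_contains_Inf)
  then have \<tau>: "\<tau> \<in> {a..b}" "R \<le> norm (X \<tau>)" by (auto simp: S_def)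
  have before: "norm (X s) < R" if "s \<in> {a..b}" "s < \<tau>" for s
  proof (rule ccontr)
    assume "\<not> norm (X s) < R"
    then have "s \<in> S" using that by (auto simp: S_def)
    then have "\<tau> \<le> s" unfolding \<tau>_def by (rule cInf_lower[OF _ \<open>bdd_below S\<close>])
    with that show False by simp
  qed
  have "a \<noteq> \<tau>" using \<tau>(2) \<open>norm (X a) < R\<close> by auto
  then have "a < \<tau>" using \<tau>(1) by simp
  have "norm (X s) \<le> R" if s: "s \<in> {a..\<tau>}" for s
  proof (cases "s < \<tau>")
    case True
    then show ?thesis using before[of s] s \<tau> by auto
  next
    case False
    then have "s = \<tau>" using s by simp
    have "continuous_on (closure {a..<\<tau>}) X"
      using \<open>a < \<tau>\<close> \<tau> by (simp add: continuous_on_subset[OF X])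
    moreover have "\<forall>y\<in>{a..<\<tau>}. norm (X y) \<le> R" using before \<tau> by (auto simp: less_imp_le)
    moreover have "\<tau> \<in> closure {a..<\<tau>}" using \<open>a < \<tau>\<close> by simp
    ultimately show ?thesis unfolding \<open>s = \<tau>\<close> by (rule continuous_on_closure_norm_le)
  qed
  then have "norm (X \<tau>) < R" by (rule stay[OF \<tau>(1)])
  with \<tau>(2) show False by simp
qed

lemma continuous_truncation:
  fixes f :: "'a::euclidean_space \<Rightarrow> 'b::real_normed_vector"
  assumes "continuous_on UNIV f" and "0 \<le> R"
  obtains g K where "continuous_on UNIV g" "\<And>y. norm (g y) \<le> K" "\<And>y. norm y \<le> R \<Longrightarrow> g y = f y"
proof -
  define p where "p = closest_point (cball (0::'a) R)"
  have p: "continuous_on UNIV p" "\<And>y. norm (p y) \<le> R"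
    unfolding p_def using \<open>0 \<le> R\<close> closest_point_in_set[of "cball 0 R"]
    by (auto intro: continuous_on_closest_point)
  obtain K where "\<And>y. norm y \<le> R \<Longrightarrow> norm (f y) \<le> K"
    using continuous_on_cball_bounded[OF assms(1)] by blast
  show ?thesis
  proof (rule that[of "f \<circ> p" K])
    show "continuous_on UNIV (f \<circ> p)"
      using continuous_on_compose[OF p(1) continuous_on_subset[OF assms(1)]] by simp
    show "norm ((f \<circ> p) y) \<le> K" for y using p(2) \<open>\<And>y. norm y \<le> R \<Longrightarrow> norm (f y) \<le> K\<close> by simp
    show "(f \<circ> p) y = f y" if "norm y \<le> R" for y
      using that closest_point_self[of y "cball 0 R"] by (simp add: p_def)
  qed
qed

lemma floor_divide_grid:
  fixes \<delta> s :: real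
  assumes "0 < \<delta>" "0 \<le> s"
  shows "real (nat \<lfloor>s / \<delta>\<rfloor>) * \<delta> \<le> s" "s < real (nat \<lfloor>s / \<delta>\<rfloor>) * \<delta> + \<delta>"
proof -
  have "real (nat \<lfloor>s / \<delta>\<rfloor>) = real_of_int \<lfloor>s / \<delta>\<rfloor>"
    using assms by simp
  moreover have "real_of_int \<lfloor>s / \<delta>\<rfloor> * \<delta> \<le> s"
    using mult_right_mono[OF of_int_floor_le[of "s / \<delta>"], of \<delta>] assms by simp
  moreover have "s < (real_of_int \<lfloor>s / \<delta>\<rfloor> + 1) * \<delta>"
    using mult_strict_right_mono[OF real_of_int_floor_add_one_gt[of "s / \<delta>"] assms(1)] assms by simp
  ultimately show "real (nat \<lfloor>s / \<delta>\<rfloor>) * \<delta> \<le> s" "s < real (nat \<lfloor>s / \<delta>\<rfloor>) * \<delta> + \<delta>"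
    by (simp_all add: algebra_simps)
qed

lemma nat_floor_divide_eq:
  fixes \<delta> s :: real
  assumes "0 < \<delta>" "real k * \<delta> \<le> s" "s < real (Suc k) * \<delta>"
  shows "nat \<lfloor>s / \<delta>\<rfloor> = k"
proof -
  have "real k \<le> s / \<delta>" "s / \<delta> < real k + 1"
    using assms by (simp_all add: field_simps)
  then have "\<lfloor>s / \<delta>\<rfloor> = int k" by (simp add: floor_eq_iff)
  then show ?thesis by simp
qed

lemma measurable_floor_divide_comp:
  fixes p :: "nat \<Rightarrow> 'b::euclidean_space" and \<delta> :: real
  shows "(\<lambda>s. p (nat \<lfloor>s / \<delta>\<rfloor>)) \<in> borel_measurable (lebesgue_on S)"
proof -
  have "(\<lambda>s::real. \<lfloor>s / \<delta>\<rfloor>) \<in> measurable borel (count_space UNIV)"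
    by measurable
  then have "(\<lambda>s. p (nat \<lfloor>s / \<delta>\<rfloor>)) \<in> borel_measurable lborel"
    by (simp add: measurable_compose[of _ _ "count_space UNIV"])
  then show ?thesis
    by (intro measurable_restrict_space1 measurable_completion)
qed

locale bounded_skeleton_field =
  fixes B :: "real^'d \<Rightarrow> real^'d" and S :: "real^'d \<Rightarrow> real^'m^'d" and h :: "real \<Rightarrow> real^'m"
    and KB KS T :: real
  assumes continuous_B: "continuous_on UNIV B" and continuous_S: "continuous_on UNIV S"
    and norm_B_le: "\<And>y. norm (B y) \<le> KB" and norm_S_le: "\<And>y. norm (S y) \<le> KS"
    and integrable_h: "h absolutely_integrable_on {0..T}"
begin

definition majorant :: "real \<Rightarrow> real"
  where "majorant s = KB + KS * norm (h s)"

lemma majorant_nonneg: "0 \<le> majorant s"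
  using norm_B_le[of 0] norm_S_le[of 0] unfolding majorant_def
  by (meson add_nonneg_nonneg mult_nonneg_nonneg norm_ge_zero order_trans)

lemma majorant_integrable: "majorant integrable_on {0..T}"
proof -
  have "(\<lambda>s. norm (h s)) integrable_on {0..T}"
    using integrable_h by (simp add: absolutely_integrable_on_def)
  from integrable_on_cmult_left[OF this, of KS] show ?thesis
    unfolding majorant_def by (intro integrable_add) auto
qed

lemma norm_field_le_majorant: "norm (B y + S y *v h s) \<le> majorant s"
proof -
  have "norm (S y *v h s) \<le> KS * norm (h s)"
    using norm_matrix_vector_mult_le[of "S y" "h s"] norm_S_le[of y]
    by (meson mult_right_mono norm_ge_zero order_trans)
  then show ?thesis
    using norm_triangle_ineq[of "B y" "S y *v h s"] norm_B_le[of y] by (simp add: majorant_def)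
qed

lemma field_absolutely_integrable:
  assumes "Y \<in> borel_measurable (lebesgue_on {0..T})"
  shows "(\<lambda>s. B (Y s) + S (Y s) *v h s) absolutely_integrable_on {0..T}"
proof (rule measurable_bounded_by_integrable_imp_absolutely_integrable[OF _ _ majorant_integrable])
  have "(\<lambda>s. B (Y s)) \<in> borel_measurable (lebesgue_on {0..T})"
    "(\<lambda>s. S (Y s)) \<in> borel_measurable (lebesgue_on {0..T})"
    using measurable_compose[OF assms borel_measurable_continuous_onI[OF continuous_B]]
      measurable_compose[OF assms borel_measurable_continuous_onI[OF continuous_S]] by auto
  moreover have "h \<in> borel_measurable (lebesgue_on {0..T})"
    using integrable_h absolutely_integrable_measurable[of "{0..T}" h] by auto
  ultimately show "(\<lambda>s. B (Y s) + S (Y s) *v h s) \<in> borel_measurable (lebesgue_on {0..T})"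
    using bilinear_matrix_vector_mult by (intro borel_measurable_add) (auto intro: borel_measurable_bilinear)
qed (auto intro: norm_field_le_majorant)

text \<open>
  The Euler scheme with step \<open>\<delta>\<close>, written in integral form: on each cell \<open>[k\<delta>, (k+1)\<delta>)\<close>
  the coefficients are frozen at the node value \<open>euler_node x \<delta> k\<close>, and \<open>euler x \<delta>\<close>
  interpolates the nodes (\<open>euler_at_node\<close>).
\<close>
definition euler_node :: "real^'d \<Rightarrow> real \<Rightarrow> nat \<Rightarrow> real^'d"
  where "euler_node x \<delta> = rec_nat x
    (\<lambda>k z. z + integral {real k * \<delta>..real (Suc k) * \<delta>} (\<lambda>s. B z + S z *v h s))"

definition euler_frozen :: "real^'d \<Rightarrow> real \<Rightarrow> real \<Rightarrow> real^'d"
  where "euler_frozen x \<delta> s = euler_node x \<delta> (nat \<lfloor>s / \<delta>\<rfloor>)"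

definition euler :: "real^'d \<Rightarrow> real \<Rightarrow> real \<Rightarrow> real^'d"
  where "euler x \<delta> t = x + integral {0..t} (\<lambda>s. B (euler_frozen x \<delta> s) + S (euler_frozen x \<delta> s) *v h s)"

lemma euler_integrable:
  assumes "0 \<le> a" "b \<le> T"
  shows "(\<lambda>s. B (euler_frozen x \<delta> s) + S (euler_frozen x \<delta> s) *v h s) integrable_on {a..b}"
  using absolutely_integrable_on_subinterval(2)[OF field_absolutely_integrable] assms
  by (simp add: euler_frozen_def measurable_floor_divide_comp)

lemma euler_increment_le:
  assumes "0 \<le> s" "s \<le> u" "u \<le> T"
  shows "norm (euler x \<delta> u - euler x \<delta> s) \<le> integral {s..u} majorant"
proof -
  have "euler x \<delta> u - euler x \<delta> s
      = integral {s..u} (\<lambda>s. B (euler_frozen x \<delta> s) + S (euler_frozen x \<delta> s) *v h s)"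
    using indefinite_integral_diff[OF euler_integrable[of 0 T] assms] assms by (simp add: euler_def)
  also have "norm \<dots> \<le> integral {s..u} majorant"
    using assms norm_field_le_majorant
    by (intro integral_norm_bound_integral euler_integrable integrable_on_subinterval[OF majorant_integrable]) auto
  finally show ?thesis .
qed

lemma euler_at_node:
  assumes "0 < \<delta>" "real k * \<delta> \<le> T"
  shows "euler x \<delta> (real k * \<delta>) = euler_node x \<delta> k"
  using assms(2)
proof (induction k)
  case 0
  then show ?case by (simp add: euler_def euler_node_def)
next
  case (Suc k)
  let ?a = "real k * \<delta>" and ?c = "real (Suc k) * \<delta>"
  have "0 \<le> ?a" "?a \<le> ?c" using \<open>0 < \<delta>\<close> by simp_all
  have "integral {?a..?c} (\<lambda>s. B (euler_frozen x \<delta> s) + S (euler_frozen x \<delta> s) *v h s)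
      = integral {?a..?c} (\<lambda>s. B (euler_node x \<delta> k) + S (euler_node x \<delta> k) *v h s)"
  proof (rule integral_spike[of "{?c}"])
    show "B (euler_node x \<delta> k) + S (euler_node x \<delta> k) *v h s
        = B (euler_frozen x \<delta> s) + S (euler_frozen x \<delta> s) *v h s" if "s \<in> {?a..?c} - {?c}" for s
      using nat_floor_divide_eq[OF \<open>0 < \<delta>\<close>, of k s] that by (simp add: euler_frozen_def)
  qed simp
  moreover have "euler x \<delta> ?c - euler x \<delta> ?a
      = integral {?a..?c} (\<lambda>s. B (euler_frozen x \<delta> s) + S (euler_frozen x \<delta> s) *v h s)"
    using indefinite_integral_diff[OF euler_integrable[of 0 T]] Suc.prems \<open>0 \<le> ?a\<close> \<open>?a \<le> ?c\<close>
    by (simp add: euler_def)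
  ultimately show ?case
    using Suc \<open>?a \<le> ?c\<close> by (simp add: euler_node_def algebra_simps)
qed

lemma euler_frozen_near:
  assumes "0 < \<delta>" "0 \<le> s" "s \<le> T"
  shows "norm (euler_frozen x \<delta> s - euler x \<delta> s) \<le> integral {real (nat \<lfloor>s / \<delta>\<rfloor>) * \<delta>..s} majorant"
proof -
  let ?g = "real (nat \<lfloor>s / \<delta>\<rfloor>) * \<delta>"
  have "?g \<le> s" "0 \<le> ?g" using floor_divide_grid(1)[OF assms(1,2)] assms(1) by simp_all
  then have "euler_frozen x \<delta> s = euler x \<delta> ?g"
    using euler_at_node[OF assms(1)] assms(3) by (simp add: euler_frozen_def)
  then show ?thesis
    using euler_increment_le[OF \<open>0 \<le> ?g\<close> \<open>?g \<le> s\<close> assms(3)] by (simp add: norm_minus_commute)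
qed

lemma norm_euler_le:
  assumes "t \<in> {0..T}"
  shows "norm (euler x \<delta> t) \<le> norm x + integral {0..T} majorant"
proof -
  have "norm (euler x \<delta> t - euler x \<delta> 0) \<le> integral {0..t} majorant"
    using assms by (intro euler_increment_le) auto
  also have "\<dots> \<le> integral {0..T} majorant"
    using assms majorant_nonneg by (intro indefinite_integral_mono[OF majorant_integrable]) auto
  finally show ?thesis
    using norm_triangle_sub[of "euler x \<delta> t" x] by (simp add: euler_def)
qed

lemma euler_equicontinuous:
  assumes t: "t \<in> {0..T}" and "0 < e"
  obtains d where "0 < d" "\<And>\<delta> y. y \<in> {0..T} \<Longrightarrow> norm (t - y) < d \<Longrightarrow> norm (euler x \<delta> t - euler x \<delta> y) < e"
proof -
  define M where "M u = integral {0..u} majorant" for u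
  have "continuous_on {0..T} M"
    unfolding M_def by (rule indefinite_integral_continuous_1[OF majorant_integrable])
  then obtain d where "0 < d" and d: "\<And>t'. t' \<in> {0..T} \<Longrightarrow> dist t' t < d \<Longrightarrow> dist (M t') (M t) < e"
    using t \<open>0 < e\<close> unfolding continuous_on_iff by metis
  have increment: "norm (euler x \<delta> u - euler x \<delta> s) \<le> M u - M s" if "0 \<le> s" "s \<le> u" "u \<le> T" for \<delta> s u
    using euler_increment_le[OF that] indefinite_integral_diff[OF majorant_integrable that]
    by (simp add: M_def)
  show ?thesis
  proof (rule that[OF \<open>0 < d\<close>])
    fix \<delta> y assume y: "y \<in> {0..T}" "norm (t - y) < d"
    have "norm (euler x \<delta> t - euler x \<delta> y) \<le> \<bar>M y - M t\<bar>"
      using increment[of y t \<delta>] increment[of t y \<delta>] y t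
      by (cases "y \<le> t") (simp_all add: norm_minus_commute)
    also have "\<dots> < e" using d[of y] y by (simp add: dist_real_def abs_minus_commute)
    finally show "norm (euler x \<delta> t - euler x \<delta> y) < e" .
  qed
qed

lemma euler_convergent_subsequence:
  obtains X r where "continuous_on {0..T} X" "strict_mono (r :: nat \<Rightarrow> nat)"
    "\<And>t. t \<in> {0..T} \<Longrightarrow> (\<lambda>n. euler x (\<delta> (r n)) t) \<longlonglongrightarrow> X t"
proof -
  have equicontinuous: "\<exists>d>0. \<forall>n y. y \<in> {0..T} \<and> norm (t - y) < d \<longrightarrow> norm (euler x (\<delta> n) t - euler x (\<delta> n) y) < e"
    if "t \<in> {0..T}" "0 < e" for t e
    using euler_equicontinuous[OF that] by metis
  obtain X r where "continuous_on {0..T} X" "strict_mono (r :: nat \<Rightarrow> nat)"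
    and conv: "\<And>e. 0 < e \<Longrightarrow> \<exists>N. \<forall>n t. N \<le> n \<and> t \<in> {0..T} \<longrightarrow> norm (euler x (\<delta> (r n)) t - X t) < e"
  proof (rule Arzela_Ascoli[OF compact_Icc norm_euler_le equicontinuous])
    fix X and r :: "nat \<Rightarrow> nat" assume "continuous_on {0..T} X" "strict_mono r"
      and "\<And>e. 0 < e \<Longrightarrow> \<exists>N. \<forall>n t. N \<le> n \<and> t \<in> {0..T} \<longrightarrow> norm (euler x (\<delta> (r n)) t - X t) < e"
    then show thesis by (rule that)
  qed
  moreover have "(\<lambda>n. euler x (\<delta> (r n)) t) \<longlonglongrightarrow> X t" if "t \<in> {0..T}" for t
  proof (rule LIMSEQ_I)
    fix e :: real assume "0 < e"
    then show "\<exists>N. \<forall>n\<ge>N. norm (euler x (\<delta> (r n)) t - X t) < e"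
      using conv that by blast
  qed
  ultimately show ?thesis using that by blast
qed

lemma euler_frozen_tendsto:
  assumes "\<And>n. 0 < \<delta> n" "\<delta> \<longlonglongrightarrow> 0" "s \<in> {0..T}" "(\<lambda>n. euler x (\<delta> n) s) \<longlonglongrightarrow> y"
  shows "(\<lambda>n. euler_frozen x (\<delta> n) s) \<longlonglongrightarrow> y"
proof -
  define M where "M u = integral {0..u} majorant" for u
  define g where "g n = real (nat \<lfloor>s / \<delta> n\<rfloor>) * \<delta> n" for n
  have g: "s - \<delta> n \<le> g n" "g n \<le> s" "0 \<le> g n" for n
    using floor_divide_grid[of "\<delta> n" s] assms(1)[of n] assms(3) unfolding g_def by auto
  have "g \<longlonglongrightarrow> s"
  proof (rule tendsto_sandwich[of "\<lambda>n. s - \<delta> n" _ _ "\<lambda>n. s"])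
    show "(\<lambda>n. s - \<delta> n) \<longlonglongrightarrow> s" using tendsto_diff[OF tendsto_const assms(2)] by simp
  qed (use g in \<open>auto intro!: always_eventually\<close>)
  moreover have "continuous_on {0..T} M"
    unfolding M_def by (rule indefinite_integral_continuous_1[OF majorant_integrable])
  moreover have "g n \<in> {0..T}" for n
    using g(2,3)[of n] assms(3) by auto
  ultimately have "(\<lambda>n. M (g n)) \<longlonglongrightarrow> M s"
    using continuous_on_tendsto_compose[of "{0..T}" M g s] assms(3) by (simp add: always_eventually)
  from tendsto_diff[OF tendsto_const[of "M s"] this]
  have "(\<lambda>n. M s - M (g n)) \<longlonglongrightarrow> 0" by simp
  from tendsto_add[OF this tendsto_norm_zero[OF LIM_zero[OF assms(4)]]]
  have lim: "(\<lambda>n. (M s - M (g n)) + norm (euler x (\<delta> n) s - y)) \<longlonglongrightarrow> 0"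
    by simp
  have bound: "norm (euler_frozen x (\<delta> n) s - y) \<le> (M s - M (g n)) + norm (euler x (\<delta> n) s - y)" for n
  proof -
    have "norm (euler_frozen x (\<delta> n) s - euler x (\<delta> n) s) \<le> integral {g n..s} majorant"
      unfolding g_def using assms(1,3) by (intro euler_frozen_near) auto
    also have "\<dots> = M s - M (g n)"
      unfolding M_def using g(2,3)[of n] assms(3)
      by (intro indefinite_integral_diff[OF majorant_integrable, symmetric]) auto
    finally show ?thesis
      by (rule norm_diff_triangle_le) simp
  qed
  have "(\<lambda>n. euler_frozen x (\<delta> n) s - y) \<longlonglongrightarrow> 0"
    by (rule Lim_null_comparison[OF always_eventually[OF allI[OF bound]] lim])
  then show ?thesis by (rule LIM_zero_cancel)
qed

lemma integral_equation_solvable: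
  assumes "0 < T"
  obtains X where "continuous_on {0..T} X"
    "\<And>t. t \<in> {0..T} \<Longrightarrow> X t = x + integral {0..t} (\<lambda>s. B (X s) + S (X s) *v h s)"
proof -
  define \<delta> where "\<delta> n = T / real (Suc n)" for n
  have \<delta>: "0 < \<delta> n" for n using assms by (simp add: \<delta>_def)
  have "\<delta> \<longlonglongrightarrow> 0"
    unfolding \<delta>_def by (rule LIMSEQ_Suc[OF lim_const_over_n])
  obtain X r where X: "continuous_on {0..T} X" and "strict_mono r"
    and euler_lim: "\<And>t. t \<in> {0..T} \<Longrightarrow> (\<lambda>n. euler x (\<delta> (r n)) t) \<longlonglongrightarrow> X t"
    using euler_convergent_subsequence[of x \<delta>] by blast
  have "(\<lambda>n. \<delta> (r n)) \<longlonglongrightarrow> 0"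
    using LIMSEQ_subseq_LIMSEQ[OF \<open>\<delta> \<longlonglongrightarrow> 0\<close> \<open>strict_mono r\<close>] by (simp add: o_def)
  then have frozen_lim: "(\<lambda>n. euler_frozen x (\<delta> (r n)) s) \<longlonglongrightarrow> X s" if "s \<in> {0..T}" for s
    using euler_frozen_tendsto[of "\<lambda>n. \<delta> (r n)", OF \<delta> _ that euler_lim[OF that]] by blast
  show thesis
  proof (rule that[OF X])
    fix t assume t: "t \<in> {0..T}"
    have "(\<lambda>n. integral {0..t} (\<lambda>s. B (euler_frozen x (\<delta> (r n)) s) + S (euler_frozen x (\<delta> (r n)) s) *v h s))
        \<longlonglongrightarrow> integral {0..t} (\<lambda>s. B (X s) + S (X s) *v h s)"
    proof (rule dominated_convergence(2))
      show "majorant integrable_on {0..t}"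
        using t by (intro integrable_on_subinterval[OF majorant_integrable]) auto
      show "(\<lambda>s. B (euler_frozen x (\<delta> (r n)) s) + S (euler_frozen x (\<delta> (r n)) s) *v h s) integrable_on {0..t}" for n
        using t by (intro euler_integrable) auto
      show "norm (B (euler_frozen x (\<delta> (r n)) s) + S (euler_frozen x (\<delta> (r n)) s) *v h s) \<le> majorant s" for n s
        by (rule norm_field_le_majorant)
      fix s assume s: "s \<in> {0..t}"
      have "continuous_on UNIV (\<lambda>y. B y + S y *v h s)"
        by (intro continuous_intros continuous_on_matrix_vector_mult continuous_B continuous_S)
      moreover have "s \<in> {0..T}" using s t by auto
      ultimately show "(\<lambda>n. B (euler_frozen x (\<delta> (r n)) s) + S (euler_frozen x (\<delta> (r n)) s) *v h s)
          \<longlonglongrightarrow> B (X s) + S (X s) *v h s"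
        using continuous_on_tendsto_compose[OF _ frozen_lim UNIV_I always_eventually] by simp
    qed
    then have "(\<lambda>n. euler x (\<delta> (r n)) t) \<longlonglongrightarrow> x + integral {0..t} (\<lambda>s. B (X s) + S (X s) *v h s)"
      unfolding euler_def by (intro tendsto_add tendsto_const)
    then show "X t = x + integral {0..t} (\<lambda>s. B (X s) + S (X s) *v h s)"
      using LIMSEQ_unique[OF euler_lim[OF t]] by blast
  qed
qed

end

lemma skeleton_integrand_absolutely_integrable:
  fixes b :: "real^'d \<Rightarrow> real^'d" and \<sigma> :: "real^'d \<Rightarrow> real^'m^'d" and h :: "real \<Rightarrow> real^'m"
  assumes "continuous_on UNIV b" "continuous_on UNIV \<sigma>"
    and "h absolutely_integrable_on {0..u}" "continuous_on {0..u} X"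
  shows "(\<lambda>s. b (X s) + \<sigma> (X s) *v h s) absolutely_integrable_on {0..u}"
proof -
  have bX: "continuous_on {0..u} (\<lambda>s. b (X s))" and \<sigma>X: "continuous_on {0..u} (\<lambda>s. \<sigma> (X s))"
    using continuous_on_compose2[OF assms(1) assms(4)] continuous_on_compose2[OF assms(2) assms(4)] by auto
  have "(\<lambda>s. (\<lambda>A v. A *v v) (\<sigma> (X s)) (h s)) absolutely_integrable_on {0..u}"
  proof (rule absolutely_integrable_bounded_measurable_product[OF bilinear_matrix_vector_mult _ _ _ assms(3)])
    show "(\<lambda>s. \<sigma> (X s)) \<in> borel_measurable (lebesgue_on {0..u})"
      by (rule continuous_imp_measurable_on_sets_lebesgue[OF \<sigma>X]) auto
    show "bounded ((\<lambda>s. \<sigma> (X s)) ` {0..u})"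
      by (intro compact_imp_bounded compact_continuous_image \<sigma>X) auto
  qed auto
  then show ?thesis
    using set_integral_add(1)[OF absolutely_integrable_continuous_real[OF bX]] by simp
qed

lemma lyapunov_confines_skeleton_path:
  fixes b :: "real^'d \<Rightarrow> real^'d" and \<sigma> :: "real^'d \<Rightarrow> real^'m^'d" and h :: "real \<Rightarrow> real^'m"
  assumes dV: "\<And>y. (V has_derivative (\<lambda>v. gV y \<bullet> v)) (at y)" and gV: "continuous_on UNIV gV"
    and V_nonneg: "\<And>y. 0 \<le> V y" and "0 \<le> K"
    and drift: "\<And>y k. gV y \<bullet> (b y + \<sigma> y *v k) \<le> K * (1 + (norm k)\<^sup>2) * (1 + V y)"
    and cb: "continuous_on UNIV b" and cs: "continuous_on UNIV \<sigma>" and "L2_on T h"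
    and X: "continuous_on {0..T} X" and "X 0 = x"
    and solves: "\<And>t. t \<in> {0..T} \<Longrightarrow> (\<And>s. s \<in> {0..t} \<Longrightarrow> norm (X s) \<le> R) \<Longrightarrow>
      X t = x + integral {0..t} (\<lambda>s. b (X s) + \<sigma> (X s) *v h s)"
    and sublevel: "\<And>y. 1 + V y \<le> (1 + V x) * exp (integral {0..T} (\<lambda>s. K * (1 + (norm (h s))\<^sup>2)))
      \<Longrightarrow> norm y < R"
    and t: "t \<in> {0..T}"
  shows "norm (X t) < R"
proof -
  define w where "w = (\<lambda>s. K * (1 + (norm (h s))\<^sup>2))"
  note sublevel = sublevel[folded w_def]
  define f where "f s = b (X s) + \<sigma> (X s) *v h s" for s
  note h = L2_on_absolutely_integrable[OF \<open>L2_on T h\<close>]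
  have "(\<lambda>s. 1 + (norm (h s))\<^sup>2) absolutely_integrable_on {0..T}"
    using set_integral_add(1)[OF absolutely_integrable_continuous_real[OF continuous_on_const] h(1)] by simp
  then have w: "w absolutely_integrable_on {0..T}" "\<And>s. 0 \<le> w s"
    using \<open>0 \<le> K\<close> by (auto simp: w_def)
  have "1 + V x \<le> (1 + V x) * exp (integral {0..T} w)"
    using V_nonneg[of x] w by (auto intro!: integral_nonneg simp: absolutely_integrable_on_def)
  then have "norm (X 0) < R"
    using sublevel \<open>X 0 = x\<close> by simp
  then show ?thesis
  proof (rule continuous_on_stays_in_ball[OF X _ _ t])
    fix \<tau> assume \<tau>: "\<tau> \<in> {0..T}" and in_ball: "\<And>s. s \<in> {0..\<tau>} \<Longrightarrow> norm (X s) \<le> R"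
    have X_at: "x + integral {0..s} f = X s" if "s \<in> {0..\<tau>}" for s
      using solves[of s] in_ball that \<tau> by (simp add: f_def[abs_def])
    have "f absolutely_integrable_on {0..\<tau>}"
      unfolding f_def using \<tau>
      by (intro skeleton_integrand_absolutely_integrable cb cs continuous_on_subset[OF X]
          absolutely_integrable_on_subinterval(1)[OF h(2)]) auto
    then have "1 + V (x + integral {0..\<tau>} f) \<le> (1 + V x) * exp (integral {0..\<tau>} w)"
    proof (rule lyapunov_gronwall_bound[OF dV gV V_nonneg])
      show "w absolutely_integrable_on {0..\<tau>}"
        using absolutely_integrable_on_subinterval(1)[OF w(1)] \<tau> by simp
      show "gV (x + integral {0..s} f) \<bullet> f s \<le> w s * (1 + V (x + integral {0..s} f))"
        if "s \<in> {0..\<tau>}" for s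
        using drift[of "X s" "h s"] X_at[OF that] by (simp add: f_def w_def)
    qed (use w(2) \<tau> in simp_all)
    also have "\<dots> \<le> (1 + V x) * exp (integral {0..T} w)"
    proof -
      have "integral {0..\<tau>} w \<le> integral {0..T} w"
        using w \<tau> by (intro indefinite_integral_mono[of w 0 T]) (auto simp: absolutely_integrable_on_def)
      then show ?thesis
        using V_nonneg[of x] by (simp add: mult_left_mono)
    qed
    finally show "norm (X \<tau>) < R"
      using sublevel X_at[of \<tau>] \<tau> by simp
  qed
qed

lemma skeleton_solution_exists:
  fixes b :: "real^'d \<Rightarrow> real^'d" and \<sigma> :: "real^'d \<Rightarrow> real^'m^'d"
  assumes cb: "continuous_on UNIV b" and cs: "continuous_on UNIV \<sigma>"
    and "assumption_2_2 b \<sigma>" and "0 < T" and "L2_on T h"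
  obtains X where "skeleton_solution b \<sigma> h x T X"
proof -
  obtain V gV K where dV: "\<And>y. (V has_derivative (\<lambda>v. gV y \<bullet> v)) (at y)" and gV: "continuous_on UNIV gV"
    and V_nonneg: "\<And>y. 0 \<le> V y" and V_coercive: "filterlim V at_top at_infinity" and "0 < K"
    and drift: "\<And>y k. gV y \<bullet> (b y + \<sigma> y *v k) \<le> K * (1 + (norm k)\<^sup>2) * (1 + V y)"
    using assumption_2_2_lyapunov_drift[OF \<open>assumption_2_2 b \<sigma>\<close>] by blast
  define \<beta> where "\<beta> = (1 + V x) * exp (integral {0..T} (\<lambda>s. K * (1 + (norm (h s))\<^sup>2)))"
  obtain r where r: "\<And>y. r \<le> norm y \<Longrightarrow> \<beta> \<le> V y"
    using V_coercive unfolding filterlim_at_top eventually_at_infinity by blast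
  define R where "R = max r 0"
  have sublevel: "norm y < R" if "1 + V y \<le> \<beta>" for y
  proof (rule ccontr)
    assume "\<not> norm y < R"
    then have "\<beta> \<le> V y" using r[of y] by (simp add: R_def)
    with that show False by simp
  qed
  obtain bt Kb where bt: "continuous_on UNIV bt" "\<And>y. norm (bt y) \<le> Kb" "\<And>y. norm y \<le> R \<Longrightarrow> bt y = b y"
    using continuous_truncation[OF cb, of R] by (auto simp: R_def)
  obtain st Ks where st: "continuous_on UNIV st" "\<And>y. norm (st y) \<le> Ks" "\<And>y. norm y \<le> R \<Longrightarrow> st y = \<sigma> y"
    using continuous_truncation[OF cs, of R] by (auto simp: R_def)
  interpret bounded_skeleton_field bt st h Kb Ks T
    using bt st L2_on_absolutely_integrable(2)[OF \<open>L2_on T h\<close>] by unfold_locales auto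
  obtain X where X: "continuous_on {0..T} X"
    and X_eq: "\<And>t. t \<in> {0..T} \<Longrightarrow> X t = x + integral {0..t} (\<lambda>s. bt (X s) + st (X s) *v h s)"
    using integral_equation_solvable[OF \<open>0 < T\<close>] by blast
  have solves: "X t = x + integral {0..t} (\<lambda>s. b (X s) + \<sigma> (X s) *v h s)"
    if t: "t \<in> {0..T}" and in_ball: "\<And>s. s \<in> {0..t} \<Longrightarrow> norm (X s) \<le> R" for t
    using X_eq[OF t] in_ball by (auto simp: bt(3) st(3) intro!: integral_cong)
  have "X 0 = x" using X_eq[of 0] \<open>0 < T\<close> by simp
  note inside = lyapunov_confines_skeleton_path[OF dV gV V_nonneg less_imp_le[OF \<open>0 < K\<close>] drift cb cs
      \<open>L2_on T h\<close> X \<open>X 0 = x\<close> solves sublevel[unfolded \<beta>_def]]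
  have "skeleton_solution b \<sigma> h x T X"
    unfolding skeleton_solution_iff
  proof (intro conjI X ballI)
    fix t assume t: "t \<in> {0..T}"
    have "norm (X s) \<le> R" if "s \<in> {0..t}" for s
      using inside[of s] that t by simp
    then show "X t = x + integral {0..t} (\<lambda>s. b (X s) + \<sigma> (X s) *v h s)"
      using solves[OF t] by simp
    show "(\<lambda>s. b (X s) + \<sigma> (X s) *v h s) absolutely_integrable_on {0..t}"
      using t by (intro skeleton_integrand_absolutely_integrable cb cs continuous_on_subset[OF X]
          absolutely_integrable_on_subinterval(1)[OF L2_on_absolutely_integrable(2)[OF \<open>L2_on T h\<close>]]) auto
  qed
  then show thesis by (rule that)
qed

theorem proposition2p2:
  fixes b :: "real^'d \<Rightarrow> real^'d" and \<sigma> :: "real^'d \<Rightarrow> real^'m^'d"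
  assumes "continuous_on UNIV b" and "continuous_on UNIV \<sigma>"
    and "assumption_2_1 b \<sigma>" and "assumption_2_2 b \<sigma>"
    and "T > 0" and "L2_on T h"
  shows "\<exists>X. skeleton_solution b \<sigma> h x T X \<and>
           (\<forall>Y. skeleton_solution b \<sigma> h x T Y \<longrightarrow> (\<forall>t\<in>{0..T}. Y t = X t))"
proof -
  obtain X where "skeleton_solution b \<sigma> h x T X"
    using skeleton_solution_exists[OF assms(1,2,4,5,6)] by blast
  moreover have "Y t = X t" if "skeleton_solution b \<sigma> h x T Y" "t \<in> {0..T}" for Y t
    using skeleton_solution_unique[OF assms(1-3,6) \<open>skeleton_solution b \<sigma> h x T X\<close> that] .
  ultimately show ?thesis by blast
qed

end
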